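(* Let $M$ be a model of a complete affine theory $T$ and let $f:M\to M$ be a definable function. Then there exists a type $p(x)\in S_1(T)$ which is $f$-invariant, i.e. $p(\phi(x))=p(\phi(f(x)))$ for every affine formula $\phi(x)$. In particular, if $M$ is $\aleph_0$-saturated then there exists $c\in M$ with $tp(c)=tp(f(c))$.
   Context: Affine continuous logic: $L$-structures are complete metric spaces $(M,d)$ with $d\le1$ and Lipschitz interpretations of function symbols and $[0,1]$-valued relation symbols. Affine formulas are built from $1$ and atomic formulas (including $d$) using only $r\cdot\phi$ ($r\in\mathbb R$), $\phi+\psi$, $\inf_x$, $\sup_x$. $T$ is complete: for each sentence $\phi$ there is a unique $r$ with $T\models\phi=r$. A predicate $P:M^n\to\mathbb R$ is definable (without parameters) if it is a uniform limit of $\phi_k^M$ for affine formulas $\phi_k$; the same sequence defines it in all models of $T$. A function $f:M\to M$ is definable if $(x,y)\mapsto d(f(x),y)$ is a definable predicate; then for every formula $\phi(x)$, $x\mapsto\phi(f(x))$ is a definable predicate. A $1$-type of $T$ is a maximal set of conditions in one variable satisfiable with $T$, identified with a positive linear functional $\phi\mapsto p(\phi)$ on formulas with $p(1)=1$, extended to definable predicates by $p(P)=\lim_kp(\phi_k)$ when $\phi_k\to P$ uniformly. $S_1(T)$ is the set of $1$-types. $tp(c)$ is the type $\phi\mapsto\phi^M(c)$. $M$ is $\aleph_0$-saturated if every type over a finite subset of $M$ is realized in $M$. *)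

theory Defs
  imports "HOL-Analysis.Analysis"
begin

datatype 'f aterm = AVar nat | AFn 'f "'f aterm list"

datatype ('f, 'r) aform =
    AOne
  | ADist "'f aterm" "'f aterm"
  | ARel 'r "'f aterm list"
  | AScale real "('f, 'r) aform"
  | AAdd "('f, 'r) aform" "('f, 'r) aform"
  | AInf nat "('f, 'r) aform"
  | ASup nat "('f, 'r) aform"

fun wf_term :: "('f \<Rightarrow> nat) \<Rightarrow> 'f aterm \<Rightarrow> bool" where
  "wf_term fa (AVar i) = True"
| "wf_term fa (AFn g ts) = (length ts = fa g \<and> (\<forall>t\<in>set ts. wf_term fa t))"

fun wf_form :: "('f \<Rightarrow> nat) \<Rightarrow> ('r \<Rightarrow> nat) \<Rightarrow> ('f, 'r) aform \<Rightarrow> bool" where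
  "wf_form fa ra AOne = True"
| "wf_form fa ra (ADist t u) = (wf_term fa t \<and> wf_term fa u)"
| "wf_form fa ra (ARel R ts) = (length ts = ra R \<and> (\<forall>t\<in>set ts. wf_term fa t))"
| "wf_form fa ra (AScale c \<phi>) = wf_form fa ra \<phi>"
| "wf_form fa ra (AAdd \<phi> \<psi>) = (wf_form fa ra \<phi> \<and> wf_form fa ra \<psi>)"
| "wf_form fa ra (AInf i \<phi>) = wf_form fa ra \<phi>"
| "wf_form fa ra (ASup i \<phi>) = wf_form fa ra \<phi>"

fun tfv :: "'f aterm \<Rightarrow> nat set" where
  "tfv (AVar i) = {i}"
| "tfv (AFn g ts) = (\<Union>t\<in>set ts. tfv t)"

fun ffv :: "('f, 'r) aform \<Rightarrow> nat set" where
  "ffv AOne = {}"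
| "ffv (ADist t u) = tfv t \<union> tfv u"
| "ffv (ARel R ts) = (\<Union>t\<in>set ts. tfv t)"
| "ffv (AScale c \<phi>) = ffv \<phi>"
| "ffv (AAdd \<phi> \<psi>) = ffv \<phi> \<union> ffv \<psi>"
| "ffv (AInf i \<phi>) = ffv \<phi> - {i}"
| "ffv (ASup i \<phi>) = ffv \<phi> - {i}"

text \<open>An L-structure: the universe is the whole (nonempty) complete metric type 'a,
  with distance bounded by 1; FI interprets function symbols, RI relation symbols.\<close>

definition lipschitz_list :: "nat \<Rightarrow> ('a::metric_space list \<Rightarrow> 'b::metric_space) \<Rightarrow> bool" where
  "lipschitz_list n F \<longleftrightarrow> (\<exists>L. \<forall>xs ys. length xs = n \<longrightarrow> length ys = n \<longrightarrow>
      dist (F xs) (F ys) \<le> L * (\<Sum>i<n. dist (xs ! i) (ys ! i)))"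

definition is_structure ::
  "('f \<Rightarrow> nat) \<Rightarrow> ('r \<Rightarrow> nat) \<Rightarrow> ('f \<Rightarrow> 'a::complete_space list \<Rightarrow> 'a) \<Rightarrow> ('r \<Rightarrow> 'a list \<Rightarrow> real) \<Rightarrow> bool"
  where
  "is_structure fa ra FI RI \<longleftrightarrow>
     (\<forall>x y::'a. dist x y \<le> 1)
   \<and> (\<forall>g. lipschitz_list (fa g) (FI g))
   \<and> (\<forall>R. lipschitz_list (ra R) (RI R))
   \<and> (\<forall>R xs. length xs = ra R \<longrightarrow> 0 \<le> RI R xs \<and> RI R xs \<le> 1)"

fun teval :: "('f \<Rightarrow> 'a list \<Rightarrow> 'a) \<Rightarrow> (nat \<Rightarrow> 'a) \<Rightarrow> 'f aterm \<Rightarrow> 'a" where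
  "teval FI s (AVar i) = s i"
| "teval FI s (AFn g ts) = FI g (map (teval FI s) ts)"

fun feval :: "('f \<Rightarrow> 'a::metric_space list \<Rightarrow> 'a) \<Rightarrow> ('r \<Rightarrow> 'a list \<Rightarrow> real) \<Rightarrow> (nat \<Rightarrow> 'a)
               \<Rightarrow> ('f, 'r) aform \<Rightarrow> real" where
  "feval FI RI s AOne = 1"
| "feval FI RI s (ADist t u) = dist (teval FI s t) (teval FI s u)"
| "feval FI RI s (ARel R ts) = RI R (map (teval FI s) ts)"
| "feval FI RI s (AScale c \<phi>) = c * feval FI RI s \<phi>"
| "feval FI RI s (AAdd \<phi> \<psi>) = feval FI RI s \<phi> + feval FI RI s \<psi>"
| "feval FI RI s (AInf i \<phi>) = (INF a. feval FI RI (s(i := a)) \<phi>)"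
| "feval FI RI s (ASup i \<phi>) = (SUP a. feval FI RI (s(i := a)) \<phi>)"

text \<open>Formulas in the variable x (= variable 0) and parameters a_1..a_n (= variables 1..n).\<close>
definition forms_n :: "('f \<Rightarrow> nat) \<Rightarrow> ('r \<Rightarrow> nat) \<Rightarrow> nat \<Rightarrow> ('f, 'r) aform set" where
  "forms_n fa ra n = {\<phi>. wf_form fa ra \<phi> \<and> ffv \<phi> \<subseteq> {..n}}"

abbreviation forms1 :: "('f \<Rightarrow> nat) \<Rightarrow> ('r \<Rightarrow> nat) \<Rightarrow> ('f, 'r) aform set" where
  "forms1 fa ra \<equiv> forms_n fa ra 0"

definition par_asg :: "'a \<Rightarrow> 'a list \<Rightarrow> nat \<Rightarrow> 'a" where
  "par_asg b as i = (if i = 0 then b else if i - 1 < length as then as ! (i - 1) else b)"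

text \<open>A 1-type over the tuple of parameters as (a finite subset of M), i.e. a type of the
  complete theory of (M, as): a positive linear functional with p(1) = 1.  Since the theory is
  that of M with the parameters named, T_as entails phi(x) \<ge> 0 iff phi(b, as) \<ge> 0 for all b in M.\<close>
definition is_type_over ::
  "('f \<Rightarrow> nat) \<Rightarrow> ('r \<Rightarrow> nat) \<Rightarrow> ('f \<Rightarrow> 'a::metric_space list \<Rightarrow> 'a) \<Rightarrow> ('r \<Rightarrow> 'a list \<Rightarrow> real)
     \<Rightarrow> 'a list \<Rightarrow> (('f, 'r) aform \<Rightarrow> real) \<Rightarrow> bool" where
  "is_type_over fa ra FI RI as p \<longleftrightarrow>
     p AOne = 1
   \<and> (\<forall>\<phi>\<in>forms_n fa ra (length as). \<forall>\<psi>\<in>forms_n fa ra (length as). p (AAdd \<phi> \<psi>) = p \<phi> + p \<psi>)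
   \<and> (\<forall>\<phi>\<in>forms_n fa ra (length as). \<forall>c. p (AScale c \<phi>) = c * p \<phi>)
   \<and> (\<forall>\<phi>\<in>forms_n fa ra (length as).
        (\<forall>b. 0 \<le> feval FI RI (par_asg b as) \<phi>) \<longrightarrow> 0 \<le> p \<phi>)"

abbreviation is_type1 where
  "is_type1 fa ra FI RI p \<equiv> is_type_over fa ra FI RI [] p"

definition realizes ::
  "('f \<Rightarrow> nat) \<Rightarrow> ('r \<Rightarrow> nat) \<Rightarrow> ('f \<Rightarrow> 'a::metric_space list \<Rightarrow> 'a) \<Rightarrow> ('r \<Rightarrow> 'a list \<Rightarrow> real)
     \<Rightarrow> 'a list \<Rightarrow> (('f, 'r) aform \<Rightarrow> real) \<Rightarrow> 'a \<Rightarrow> bool" where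
  "realizes fa ra FI RI as p b \<longleftrightarrow>
     (\<forall>\<phi>\<in>forms_n fa ra (length as). p \<phi> = feval FI RI (par_asg b as) \<phi>)"

definition aleph0_saturated ::
  "('f \<Rightarrow> nat) \<Rightarrow> ('r \<Rightarrow> nat) \<Rightarrow> ('f \<Rightarrow> 'a::metric_space list \<Rightarrow> 'a) \<Rightarrow> ('r \<Rightarrow> 'a list \<Rightarrow> real) \<Rightarrow> bool" where
  "aleph0_saturated fa ra FI RI \<longleftrightarrow>
     (\<forall>as p. is_type_over fa ra FI RI as p \<longrightarrow> (\<exists>b. realizes fa ra FI RI as p b))"

definition approx1 ::
  "('f \<Rightarrow> nat) \<Rightarrow> ('r \<Rightarrow> nat) \<Rightarrow> ('f \<Rightarrow> 'a::metric_space list \<Rightarrow> 'a) \<Rightarrow> ('r \<Rightarrow> 'a list \<Rightarrow> real)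
     \<Rightarrow> (nat \<Rightarrow> ('f, 'r) aform) \<Rightarrow> ('a \<Rightarrow> real) \<Rightarrow> bool" where
  "approx1 fa ra FI RI \<psi> P \<longleftrightarrow>
     (\<forall>k. \<psi> k \<in> forms1 fa ra)
   \<and> (\<forall>e>0. \<exists>N. \<forall>k\<ge>N. \<forall>x. \<bar>feval FI RI (\<lambda>_. x) (\<psi> k) - P x\<bar> \<le> e)"

text \<open>v is the value p(P) of the type p at the definable predicate P:
  P is definable and p(\<psi>_k) \<longrightarrow> v for every approximating sequence \<psi>_k.\<close>
definition type_ext_value ::
  "('f \<Rightarrow> nat) \<Rightarrow> ('r \<Rightarrow> nat) \<Rightarrow> ('f \<Rightarrow> 'a::metric_space list \<Rightarrow> 'a) \<Rightarrow> ('r \<Rightarrow> 'a list \<Rightarrow> real)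
     \<Rightarrow> (('f, 'r) aform \<Rightarrow> real) \<Rightarrow> ('a \<Rightarrow> real) \<Rightarrow> real \<Rightarrow> bool" where
  "type_ext_value fa ra FI RI p P v \<longleftrightarrow>
     (\<exists>\<psi>. approx1 fa ra FI RI \<psi> P)
   \<and> (\<forall>\<psi>. approx1 fa ra FI RI \<psi> P \<longrightarrow> (\<lambda>k. p (\<psi> k)) \<longlonglongrightarrow> v)"

definition definable_fun ::
  "('f \<Rightarrow> nat) \<Rightarrow> ('r \<Rightarrow> nat) \<Rightarrow> ('f \<Rightarrow> 'a::metric_space list \<Rightarrow> 'a) \<Rightarrow> ('r \<Rightarrow> 'a list \<Rightarrow> real)
     \<Rightarrow> ('a \<Rightarrow> 'a) \<Rightarrow> bool" where
  "definable_fun fa ra FI RI f \<longleftrightarrow>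
     (\<exists>\<phi>::nat \<Rightarrow> ('f, 'r) aform. (\<forall>k. \<phi> k \<in> forms_n fa ra 1)
        \<and> (\<forall>e>0. \<exists>N. \<forall>k\<ge>N. \<forall>x y.
              \<bar>feval FI RI (\<lambda>i::nat. if i = 0 then x else y) (\<phi> k) - dist (f x) y\<bar> \<le> e))"

end

theory Submission
  imports Defs
begin

text \<open>Fix any point \<open>c\<close> and average the types of \<open>c, f c, \<dots>, f\<^sup>n c\<close>. These Cesaro averages
  are types and are coordinatewise bounded, so by Tychonoff they have a cluster point \<open>p\<close>, which is
  again a type because the type conditions are closed. If \<open>\<psi>\<close> is uniformly within \<open>e\<close> of \<open>\<phi> \<circ> f\<close>,
  the averages of \<open>\<psi>\<close> and of \<open>\<phi>\<close> differ by at most \<open>e + O(1/n)\<close> since the orbit sums telescope;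
  hence \<open>p\<close> is \<open>f\<close>-invariant. Such \<open>\<psi>\<close> exist because every formula is Lipschitz, so
  \<open>\<phi>(f x) = inf\<^sub>y (\<phi>(y) + L\<cdot>d(f x, y))\<close> and \<open>d(f x, y)\<close> is a limit of formulas. In an
  \<open>\<aleph>\<^sub>0\<close>-saturated model a realisation \<open>c\<close> of \<open>p\<close> then satisfies \<open>tp(c) = tp(f c)\<close>.\<close>

lemma teval_cong: "(\<forall>i\<in>tfv t. s i = s' i) \<Longrightarrow> teval FI s t = teval FI s' t"
  by (induction t) (auto intro!: arg_cong[where f="FI _"])

lemma feval_cong: "(\<forall>i\<in>ffv \<phi>. s i = s' i) \<Longrightarrow> feval FI RI s \<phi> = feval FI RI s' \<phi>"
proof (induction \<phi> arbitrary: s s')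
  case (ADist t u)
  then show ?case using teval_cong[of t s s' FI] teval_cong[of u s s' FI] by simp
next
  case (ARel R ts)
  then have "map (teval FI s) ts = map (teval FI s') ts"
    by (auto intro!: teval_cong)
  then show ?case by (metis feval.simps(3))
next
  case (AAdd \<phi> \<psi>)
  have "feval FI RI s \<phi> = feval FI RI s' \<phi>" using AAdd.prems by (intro AAdd.IH(1)) auto
  moreover have "feval FI RI s \<psi> = feval FI RI s' \<psi>" using AAdd.prems by (intro AAdd.IH(2)) auto
  ultimately show ?case by simp
next
  case (AInf i \<phi>)
  then have "\<And>a. feval FI RI (s(i := a)) \<phi> = feval FI RI (s'(i := a)) \<phi>" by (intro AInf.IH) auto
  then show ?case by simp
next
  case (ASup i \<phi>)
  then have "\<And>a. feval FI RI (s(i := a)) \<phi> = feval FI RI (s'(i := a)) \<phi>" by (intro ASup.IH) auto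
  then show ?case by simp
qed simp_all

lemma abs_INF_diff_le:
  fixes g h :: "'a \<Rightarrow> real"
  assumes "bdd_below (range h)" and "\<And>a. \<bar>g a - h a\<bar> \<le> c"
  shows "\<bar>(INF a. g a) - (INF a. h a)\<bar> \<le> c"
proof -
  from assms(1) obtain m where "\<And>a. m \<le> h a" by (auto simp: bdd_below_def)
  with assms(2) have "bdd_below (range g)"
    by (intro bdd_belowI2[where m="m - c"]) (smt (verit))
  have "(INF a. g a) - c \<le> h b" and "(INF a. h a) - c \<le> g b" for b
    using cINF_lower[OF \<open>bdd_below (range g)\<close>, of b] cINF_lower[OF assms(1), of b] assms(2)[of b]
    by (simp_all add: abs_le_iff)
  then have "(INF a. g a) - c \<le> (INF a. h a)" and "(INF a. h a) - c \<le> (INF a. g a)"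
    by (simp_all add: cINF_greatest)
  then show ?thesis by linarith
qed

lemma abs_SUP_diff_le:
  fixes g h :: "'a \<Rightarrow> real"
  assumes "bdd_above (range h)" and "\<And>a. \<bar>g a - h a\<bar> \<le> c"
  shows "\<bar>(SUP a. g a) - (SUP a. h a)\<bar> \<le> c"
proof -
  from assms(1) obtain m where "\<And>a. h a \<le> m" by (auto simp: bdd_above_def)
  with assms(2) have "bdd_above (range g)"
    by (intro bdd_aboveI2[where M="m + c"]) (smt (verit))
  have "g b \<le> (SUP a. h a) + c" and "h b \<le> (SUP a. g a) + c" for b
    using cSUP_upper[OF _ \<open>bdd_above (range g)\<close>, of b] cSUP_upper[OF _ assms(1), of b] assms(2)[of b]
    by (simp_all add: abs_le_iff)
  then have "(SUP a. g a) \<le> (SUP a. h a) + c" and "(SUP a. h a) \<le> (SUP a. g a) + c"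
    by (simp_all add: cSUP_least)
  then show ?thesis by linarith
qed

lemma feval_bounded:
  assumes "is_structure fa ra FI RI" and "wf_form fa ra \<phi>"
  shows "\<exists>B. \<forall>s. \<bar>feval FI RI s \<phi>\<bar> \<le> B"
  using assms(2)
proof (induction \<phi>)
  case (ADist t u)
  then show ?case using assms(1) by (auto simp: is_structure_def)
next
  case (ARel R ts)
  then show ?case using assms(1) by (intro exI[of _ 1]) (auto simp: is_structure_def)
next
  case (AScale c \<phi>)
  then obtain B where "\<And>s. \<bar>feval FI RI s \<phi>\<bar> \<le> B" by auto
  then have "\<bar>feval FI RI s (AScale c \<phi>)\<bar> \<le> \<bar>c\<bar> * B" for s
    by (simp add: abs_mult mult_left_mono)
  then show ?case by blast
next
  case (AAdd \<phi> \<psi>)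
  then obtain B1 B2 where "\<And>s. \<bar>feval FI RI s \<phi>\<bar> \<le> B1" "\<And>s. \<bar>feval FI RI s \<psi>\<bar> \<le> B2" by auto
  then have "\<bar>feval FI RI s (AAdd \<phi> \<psi>)\<bar> \<le> B1 + B2" for s
    using abs_triangle_ineq[of "feval FI RI s \<phi>" "feval FI RI s \<psi>"] by (smt (verit) feval.simps(5))
  then show ?case by blast
next
  case (AInf i \<phi>)
  then obtain B where "\<And>s. \<bar>feval FI RI s \<phi> - 0\<bar> \<le> B" by auto
  from abs_INF_diff_le[of "\<lambda>_. 0", OF _ this] show ?case by auto
next
  case (ASup i \<phi>)
  then obtain B where "\<And>s. \<bar>feval FI RI s \<phi> - 0\<bar> \<le> B" by auto
  from abs_SUP_diff_le[of "\<lambda>_. 0", OF _ this] show ?case by auto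
qed auto

definition asg_lipschitz :: "real \<Rightarrow> ((nat \<Rightarrow> 'a::metric_space) \<Rightarrow> 'b::metric_space) \<Rightarrow> bool" where
  "asg_lipschitz L h \<longleftrightarrow> (\<forall>s s' d. (\<forall>i. dist (s i) (s' i) \<le> d) \<longrightarrow> dist (h s) (h s') \<le> L * d)"

lemma asg_lipschitzD:
  "asg_lipschitz L h \<Longrightarrow> (\<And>i. dist (s i) (s' i) \<le> d) \<Longrightarrow> dist (h s) (h s') \<le> L * d"
  unfolding asg_lipschitz_def by blast

lemma asg_lipschitz_mono:
  assumes "asg_lipschitz L h" and "L \<le> L'"
  shows "asg_lipschitz L' h"
  unfolding asg_lipschitz_def
proof (intro allI impI)
  fix s s' :: "nat \<Rightarrow> 'a" and d :: real
  assume d: "\<forall>i. dist (s i) (s' i) \<le> d"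
  then have "0 \<le> d" by (meson order_trans zero_le_dist)
  with assms d show "dist (h s) (h s') \<le> L' * d"
    by (meson asg_lipschitzD mult_right_mono order_trans)
qed

lemma asg_lipschitz_list:
  fixes h :: "'t \<Rightarrow> (nat \<Rightarrow> 'a::metric_space) \<Rightarrow> 'b::metric_space"
    and F :: "'b list \<Rightarrow> 'c::metric_space"
  assumes F: "lipschitz_list (length ts) F" and hL: "\<forall>t\<in>set ts. \<exists>L. asg_lipschitz L (h t)"
  shows "\<exists>L. asg_lipschitz L (\<lambda>s. F (map (\<lambda>t. h t s) ts))"
proof -
  from hL obtain Lt where "\<forall>t\<in>set ts. asg_lipschitz (Lt t) (h t)" by metis
  moreover define L where "L = Max (insert 0 (Lt ` set ts))"
  ultimately have L: "0 \<le> L" "\<And>t. t \<in> set ts \<Longrightarrow> asg_lipschitz L (h t)"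
    by (auto intro: asg_lipschitz_mono)
  from F obtain C where C: "\<And>xs ys. length xs = length ts \<Longrightarrow> length ys = length ts \<Longrightarrow>
      dist (F xs) (F ys) \<le> C * (\<Sum>i<length ts. dist (xs ! i) (ys ! i))"
    unfolding lipschitz_list_def by blast
  have "asg_lipschitz (max C 0 * (length ts * L)) (\<lambda>s. F (map (\<lambda>t. h t s) ts))"
    unfolding asg_lipschitz_def
  proof (intro allI impI)
    fix s s' :: "nat \<Rightarrow> 'a" and d :: real
    assume d: "\<forall>i. dist (s i) (s' i) \<le> d"
    let ?xs = "map (\<lambda>t. h t s) ts" and ?ys = "map (\<lambda>t. h t s') ts"
    have "dist (?xs ! i) (?ys ! i) \<le> L * d" if "i < length ts" for i
      using that d L(2)[of "ts ! i"] by (simp add: asg_lipschitzD)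
    then have "(\<Sum>i<length ts. dist (?xs ! i) (?ys ! i)) \<le> length ts * (L * d)"
      using sum_mono[of "{..<length ts}" "\<lambda>i. dist (?xs ! i) (?ys ! i)" "\<lambda>_. L * d"] by simp
    moreover have "0 \<le> (\<Sum>i<length ts. dist (?xs ! i) (?ys ! i))"
      by (simp add: sum_nonneg)
    ultimately have "C * (\<Sum>i<length ts. dist (?xs ! i) (?ys ! i)) \<le> max C 0 * (length ts * (L * d))"
      by (smt (verit, best) mult_left_mono mult_right_mono)
    with C[of ?xs ?ys] show "dist (F ?xs) (F ?ys) \<le> max C 0 * (length ts * L) * d"
      by (simp add: mult.assoc)
  qed
  then show ?thesis ..
qed

lemma asg_lipschitz_fun_upd:
  fixes h :: "(nat \<Rightarrow> 'a::metric_space) \<Rightarrow> real"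
  assumes "asg_lipschitz L h" and d: "\<forall>j. dist (s j) (s' j) \<le> d"
  shows "\<bar>h (s(i := a)) - h (s'(i := a))\<bar> \<le> L * d"
proof -
  from d have "0 \<le> d" by (meson order_trans zero_le_dist)
  with d have "dist ((s(i := a)) j) ((s'(i := a)) j) \<le> d" for j
    by simp
  with assms(1) show ?thesis by (metis asg_lipschitzD dist_real_def)
qed

lemma teval_lipschitz:
  assumes "\<forall>g. lipschitz_list (fa g) (FI g)" and "wf_term fa t"
  shows "\<exists>L. asg_lipschitz L (\<lambda>s. teval FI s t)"
  using assms(2)
proof (induction t)
  case (AVar i)
  have "asg_lipschitz 1 (\<lambda>s. teval FI s (AVar i))"
    by (simp add: asg_lipschitz_def)
  then show ?case ..
next
  case (AFn g ts)
  with assms(1) show ?case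
    using asg_lipschitz_list[of ts "FI g" "\<lambda>t s. teval FI s t"] by simp
qed

lemma dist_diff_dist_le:
  fixes a b a' b' :: "'a::metric_space"
  shows "\<bar>dist a b - dist a' b'\<bar> \<le> dist a a' + dist b b'"
  by metric

lemma feval_lipschitz:
  fixes FI :: "'f \<Rightarrow> 'a::complete_space list \<Rightarrow> 'a"
  assumes S: "is_structure fa ra FI RI" and "wf_form fa ra \<phi>"
  shows "\<exists>L. asg_lipschitz L (\<lambda>s. feval FI RI s \<phi>)"
  using assms(2)
proof (induction \<phi>)
  case AOne
  have "asg_lipschitz 0 (\<lambda>s. feval FI RI s AOne)" by (simp add: asg_lipschitz_def)
  then show ?case ..
next
  case (ADist t u)
  from S have FI: "\<forall>g. lipschitz_list (fa g) (FI g)" by (simp add: is_structure_def)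
  from ADist obtain L1 where "asg_lipschitz L1 (\<lambda>s. teval FI s t)"
    using teval_lipschitz[OF FI] by auto
  moreover from ADist obtain L2 where "asg_lipschitz L2 (\<lambda>s. teval FI s u)"
    using teval_lipschitz[OF FI] by auto
  ultimately have "asg_lipschitz (L1 + L2) (\<lambda>s. feval FI RI s (ADist t u))"
    unfolding asg_lipschitz_def dist_real_def feval.simps distrib_right
    by (smt (verit) dist_diff_dist_le)
  then show ?case ..
next
  case (ARel R ts)
  with S show ?case
    using asg_lipschitz_list[of ts "RI R" "\<lambda>t s. teval FI s t"] teval_lipschitz[of fa FI]
    by (simp add: is_structure_def)
next
  case (AScale c \<phi>)
  then obtain L where "asg_lipschitz L (\<lambda>s. feval FI RI s \<phi>)" by auto
  then have "asg_lipschitz (\<bar>c\<bar> * L) (\<lambda>s. feval FI RI s (AScale c \<phi>))"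
    unfolding asg_lipschitz_def dist_real_def
    by (simp add: right_diff_distrib[symmetric] abs_mult mult.assoc mult_left_mono)
  then show ?case ..
next
  case (AAdd \<phi> \<psi>)
  then obtain L1 L2 where
    "asg_lipschitz L1 (\<lambda>s. feval FI RI s \<phi>)" "asg_lipschitz L2 (\<lambda>s. feval FI RI s \<psi>)"
    by auto
  then have "asg_lipschitz (L1 + L2) (\<lambda>s. feval FI RI s (AAdd \<phi> \<psi>))"
    unfolding asg_lipschitz_def dist_real_def feval.simps distrib_right
    by (smt (verit))
  then show ?case ..
next
  case (AInf i \<phi>)
  then obtain L where L: "asg_lipschitz L (\<lambda>s. feval FI RI s \<phi>)" by auto
  from AInf obtain B where B: "\<And>s. \<bar>feval FI RI s \<phi>\<bar> \<le> B"
    using feval_bounded[OF S] by auto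
  have "asg_lipschitz L (\<lambda>s. feval FI RI s (AInf i \<phi>))"
    unfolding asg_lipschitz_def dist_real_def feval.simps
  proof (intro allI impI abs_INF_diff_le)
    fix s s' :: "nat \<Rightarrow> 'a" and d a
    assume "\<forall>j. dist (s j) (s' j) \<le> d"
    with L show "\<bar>feval FI RI (s(i := a)) \<phi> - feval FI RI (s'(i := a)) \<phi>\<bar> \<le> L * d"
      by (rule asg_lipschitz_fun_upd)
    show "bdd_below (range (\<lambda>a. feval FI RI (s'(i := a)) \<phi>))"
      using B by (intro bdd_belowI2[where m="- B"]) (smt (verit))
  qed
  then show ?case ..
next
  case (ASup i \<phi>)
  then obtain L where L: "asg_lipschitz L (\<lambda>s. feval FI RI s \<phi>)" by auto
  from ASup obtain B where B: "\<And>s. \<bar>feval FI RI s \<phi>\<bar> \<le> B"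
    using feval_bounded[OF S] by auto
  have "asg_lipschitz L (\<lambda>s. feval FI RI s (ASup i \<phi>))"
    unfolding asg_lipschitz_def dist_real_def feval.simps
  proof (intro allI impI abs_SUP_diff_le)
    fix s s' :: "nat \<Rightarrow> 'a" and d a
    assume "\<forall>j. dist (s j) (s' j) \<le> d"
    with L show "\<bar>feval FI RI (s(i := a)) \<phi> - feval FI RI (s'(i := a)) \<phi>\<bar> \<le> L * d"
      by (rule asg_lipschitz_fun_upd)
    show "bdd_above (range (\<lambda>a. feval FI RI (s'(i := a)) \<phi>))"
      using B by (intro bdd_aboveI2[where M=B]) (smt (verit))
  qed
  then show ?case ..
qed

lemma feval_lipschitz_on:
  fixes FI :: "'f \<Rightarrow> 'a::complete_space list \<Rightarrow> 'a"
  assumes "is_structure fa ra FI RI" and "wf_form fa ra \<phi>"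
  obtains L where "L-lipschitz_on UNIV (\<lambda>a. feval FI RI (\<lambda>_. a) \<phi>)"
proof -
  obtain L where "asg_lipschitz L (\<lambda>s. feval FI RI s \<phi>)"
    using feval_lipschitz[OF assms] by blast
  then have "asg_lipschitz (max L 0) (\<lambda>s. feval FI RI s \<phi>)"
    by (rule asg_lipschitz_mono) simp
  then have "(max L 0)-lipschitz_on UNIV (\<lambda>a. feval FI RI (\<lambda>_. a) \<phi>)"
    by (intro lipschitz_onI) (auto intro: asg_lipschitzD)
  then show thesis ..
qed

fun term_rename :: "(nat \<Rightarrow> nat) \<Rightarrow> 'f aterm \<Rightarrow> 'f aterm" where
  "term_rename \<pi> (AVar i) = AVar (\<pi> i)"
| "term_rename \<pi> (AFn g ts) = AFn g (map (term_rename \<pi>) ts)"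

fun form_rename :: "(nat \<Rightarrow> nat) \<Rightarrow> ('f, 'r) aform \<Rightarrow> ('f, 'r) aform" where
  "form_rename \<pi> AOne = AOne"
| "form_rename \<pi> (ADist t u) = ADist (term_rename \<pi> t) (term_rename \<pi> u)"
| "form_rename \<pi> (ARel R ts) = ARel R (map (term_rename \<pi>) ts)"
| "form_rename \<pi> (AScale c \<phi>) = AScale c (form_rename \<pi> \<phi>)"
| "form_rename \<pi> (AAdd \<phi> \<psi>) = AAdd (form_rename \<pi> \<phi>) (form_rename \<pi> \<psi>)"
| "form_rename \<pi> (AInf i \<phi>) = AInf (\<pi> i) (form_rename \<pi> \<phi>)"
| "form_rename \<pi> (ASup i \<phi>) = ASup (\<pi> i) (form_rename \<pi> \<phi>)"

lemma teval_term_rename: "teval FI s (term_rename \<pi> t) = teval FI (s \<circ> \<pi>) t"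
proof (induction t)
  case (AFn g ts)
  then have "map (teval FI s \<circ> term_rename \<pi>) ts = map (teval FI (s \<circ> \<pi>)) ts"
    by (simp add: comp_def)
  then show ?case by (metis teval.simps(2) term_rename.simps(2) map_map)
qed simp

lemma feval_form_rename:
  fixes FI :: "'f \<Rightarrow> 'a::metric_space list \<Rightarrow> 'a"
  assumes "inj \<pi>"
  shows "feval FI RI s (form_rename \<pi> \<phi>) = feval FI RI (s \<circ> \<pi>) \<phi>"
proof -
  have upd: "s(\<pi> i := a) \<circ> \<pi> = (s \<circ> \<pi>)(i := a)" for s :: "nat \<Rightarrow> 'a" and i a
    using assms by (auto simp: fun_eq_iff dest: injD)
  show ?thesis
  proof (induction \<phi> arbitrary: s)
    case (ARel R ts)
    have "map (teval FI s \<circ> term_rename \<pi>) ts = map (teval FI (s \<circ> \<pi>)) ts"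
      by (simp add: teval_term_rename)
    then show ?case by (metis feval.simps(3) form_rename.simps(3) map_map)
  qed (simp_all add: teval_term_rename upd)
qed

lemma wf_term_rename: "wf_term fa (term_rename \<pi> t) = wf_term fa t"
  by (induction t) auto

lemma wf_form_rename: "wf_form fa ra (form_rename \<pi> \<phi>) = wf_form fa ra \<phi>"
  by (induction \<phi>) (auto simp: wf_term_rename)

lemma tfv_term_rename: "tfv (term_rename \<pi> t) = \<pi> ` tfv t"
  by (induction t) auto

lemma ffv_form_rename:
  assumes "inj \<pi>"
  shows "ffv (form_rename \<pi> \<phi>) = \<pi> ` ffv \<phi>"
  by (induction \<phi>) (auto simp: tfv_term_rename image_set_diff[OF assms] image_Un image_UN)

lemma lipschitz_on_eq_INF:
  fixes g :: "'a::metric_space \<Rightarrow> real"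
  assumes "L-lipschitz_on UNIV g"
  shows "g y = (INF a. g a + L * dist y a)"
proof (rule antisym)
  have le: "g y \<le> g a + L * dist y a" for a
    using lipschitz_onD[OF assms, of y a] by (simp add: dist_real_def abs_le_iff)
  then show "g y \<le> (INF a. g a + L * dist y a)"
    by (rule cINF_greatest[OF UNIV_not_empty])
  have "bdd_below (range (\<lambda>a. g a + L * dist y a))"
    using le by (intro bdd_belowI2)
  then show "(INF a. g a + L * dist y a) \<le> g y"
    using cINF_lower[OF _ UNIV_I, of "\<lambda>a. g a + L * dist y a" y] by simp
qed

lemma lipschitz_on_INF_approx:
  fixes g :: "'a::metric_space \<Rightarrow> real"
  assumes L: "L-lipschitz_on UNIV g" and r: "\<And>y. \<bar>r y - dist z y\<bar> \<le> e"
  shows "\<bar>(INF y. g y + L * r y) - g z\<bar> \<le> L * e"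
proof -
  have "\<bar>(INF y. g y + L * r y) - (INF y. g y + L * dist z y)\<bar> \<le> L * e"
  proof (rule abs_INF_diff_le)
    show "bdd_below (range (\<lambda>y. g y + L * dist z y))"
    proof (rule bdd_belowI2)
      fix y
      show "g z \<le> g y + L * dist z y"
        using lipschitz_onD[OF L, of z y] by (simp add: dist_real_def abs_le_iff)
    qed
    fix y
    show "\<bar>g y + L * r y - (g y + L * dist z y)\<bar> \<le> L * e"
      using r[of y] lipschitz_on_nonneg[OF L]
      by (simp add: abs_mult right_diff_distrib[symmetric] mult_left_mono)
  qed
  then show ?thesis
    using lipschitz_on_eq_INF[OF L, of z] by simp
qed

lemma feval_AInf_rename_Suc:
  assumes "ffv \<phi> \<subseteq> {0}" and "ffv \<rho> \<subseteq> {..1}"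
  shows "feval FI RI (\<lambda>_. x) (AInf 1 (AAdd (form_rename Suc \<phi>) (AScale L \<rho>)))
       = (INF y. feval FI RI (\<lambda>_. y) \<phi> + L * feval FI RI (\<lambda>i. if i = 0 then x else y) \<rho>)"
proof -
  have "feval FI RI ((\<lambda>_. x)(1 := y) \<circ> Suc) \<phi> = feval FI RI (\<lambda>_. y) \<phi>" for y
    using assms(1) by (intro feval_cong) auto
  moreover have "feval FI RI ((\<lambda>_. x)(1 := y)) \<rho> = feval FI RI (\<lambda>i. if i = 0 then x else y) \<rho>" for y
    using assms(2) by (intro feval_cong) auto
  ultimately show ?thesis
    by (simp add: feval_form_rename)
qed

lemma approx1_definable_comp:
  fixes FI :: "'f \<Rightarrow> 'a::complete_space list \<Rightarrow> 'a" and RI :: "'r \<Rightarrow> 'a list \<Rightarrow> real"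
  assumes S: "is_structure fa ra FI RI" and "definable_fun fa ra FI RI f"
    and \<phi>: "\<phi> \<in> forms1 fa ra"
  shows "\<exists>\<psi>. approx1 fa ra FI RI \<psi> (\<lambda>x. feval FI RI (\<lambda>_. f x) \<phi>)"
proof -
  let ?asg = "\<lambda>x y i::nat. if i = 0 then x else y"
  from assms(2) obtain \<rho> :: "nat \<Rightarrow> ('f, 'r) aform" where
    \<rho>: "\<And>k. \<rho> k \<in> forms_n fa ra 1" and
    \<rho>_conv: "\<And>e. e > 0 \<Longrightarrow> \<exists>N. \<forall>k\<ge>N. \<forall>x y. \<bar>feval FI RI (?asg x y) (\<rho> k) - dist (f x) y\<bar> \<le> e"
    unfolding definable_fun_def by blast
  have fv_\<rho>: "ffv (\<rho> k) \<subseteq> {..1}" for k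
    using \<rho>[of k] by (simp add: forms_n_def)
  from \<phi> have wf: "wf_form fa ra \<phi>" and fv: "ffv \<phi> \<subseteq> {0}"
    unfolding forms_n_def by auto
  obtain L where L: "L-lipschitz_on UNIV (\<lambda>a. feval FI RI (\<lambda>_. a) \<phi>)"
    using feval_lipschitz_on[OF S wf] .
  \<comment> \<open>\<open>\<phi>(f x) = inf\<^sub>y (\<phi>(y) + L\<cdot>d(f x, y))\<close> with \<open>d(f x, y)\<close> replaced by \<open>\<rho>\<^sub>k(x, y)\<close>\<close>
  define \<theta> where "\<theta> k = AInf 1 (AAdd (form_rename Suc \<phi>) (AScale L (\<rho> k)))" for k
  have "approx1 fa ra FI RI \<theta> (\<lambda>x. feval FI RI (\<lambda>_. f x) \<phi>)"
    unfolding approx1_def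
  proof (intro conjI allI impI)
    show "\<theta> k \<in> forms1 fa ra" for k
      using \<rho>[of k] wf fv unfolding \<theta>_def forms_n_def
      by (auto simp: wf_form_rename ffv_form_rename)
    fix \<epsilon> :: real
    assume "\<epsilon> > 0"
    with lipschitz_on_nonneg[OF L] obtain N where
      N: "\<forall>k\<ge>N. \<forall>x y. \<bar>feval FI RI (?asg x y) (\<rho> k) - dist (f x) y\<bar> \<le> \<epsilon> / (L + 1)"
      using \<rho>_conv[of "\<epsilon> / (L + 1)"] by auto
    have "\<bar>feval FI RI (\<lambda>_. x) (\<theta> k) - feval FI RI (\<lambda>_. f x) \<phi>\<bar> \<le> \<epsilon>" if "k \<ge> N" for k x
    proof -
      have "\<bar>feval FI RI (\<lambda>_. x) (\<theta> k) - feval FI RI (\<lambda>_. f x) \<phi>\<bar> \<le> L * (\<epsilon> / (L + 1))"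
        unfolding \<theta>_def feval_AInf_rename_Suc[OF fv fv_\<rho>]
        using N that by (intro lipschitz_on_INF_approx[OF L]) simp
      also have "\<dots> \<le> \<epsilon>"
        using lipschitz_on_nonneg[OF L] \<open>\<epsilon> > 0\<close> by (simp add: field_simps)
      finally show ?thesis .
    qed
    then show "\<exists>N. \<forall>k\<ge>N. \<forall>x. \<bar>feval FI RI (\<lambda>_. x) (\<theta> k) - feval FI RI (\<lambda>_. f x) \<phi>\<bar> \<le> \<epsilon>"
      by blast
  qed
  then show ?thesis by blast
qed

definition orbit_avg :: "('a \<Rightarrow> 'a) \<Rightarrow> 'a \<Rightarrow> ('a \<Rightarrow> real) \<Rightarrow> nat \<Rightarrow> real" where
  "orbit_avg f c h n = (\<Sum>i<Suc n. h ((f ^^ i) c)) / Suc n"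

lemma abs_orbit_avg_le:
  assumes "\<And>x. \<bar>h x\<bar> \<le> B"
  shows "\<bar>orbit_avg f c h n\<bar> \<le> B"
proof -
  have "\<bar>\<Sum>i<Suc n. h ((f ^^ i) c)\<bar> \<le> (\<Sum>i<Suc n. B)"
    using assms by (intro order_trans[OF sum_abs] sum_mono) auto
  then show ?thesis
    by (simp add: orbit_avg_def divide_le_eq mult.commute)
qed

lemma abs_orbit_avg_diff_le:
  assumes close: "\<And>x. \<bar>g x - h (f x)\<bar> \<le> e" and bound: "\<And>x. \<bar>h x\<bar> \<le> B"
  shows "\<bar>orbit_avg f c g n - orbit_avg f c h n\<bar> \<le> e + 2 * B / Suc n"
proof -
  let ?x = "\<lambda>i. (f ^^ i) c"
  have telescope: "(\<Sum>i<Suc n. g (?x i)) - (\<Sum>i<Suc n. h (?x i))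
      = (\<Sum>i<Suc n. g (?x i) - h (?x (Suc i))) + (h (?x (Suc n)) - h (?x 0))"
    using sum_lessThan_telescope[of "\<lambda>i. h (?x i)" "Suc n"] by (simp add: sum_subtractf)
  have "\<bar>\<Sum>i<Suc n. g (?x i) - h (?x (Suc i))\<bar> \<le> (\<Sum>i<Suc n. e)"
    by (intro order_trans[OF sum_abs] sum_mono) (simp add: close)
  then have "\<bar>\<Sum>i<Suc n. g (?x i) - h (?x (Suc i))\<bar> \<le> Suc n * e" by simp
  moreover have "\<bar>h (?x (Suc n)) - h (?x 0)\<bar> \<le> 2 * B"
    using bound[of "?x (Suc n)"] bound[of "?x 0"] by linarith
  ultimately have "\<bar>(\<Sum>i<Suc n. g (?x i)) - (\<Sum>i<Suc n. h (?x i))\<bar> \<le> Suc n * e + 2 * B"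
    unfolding telescope by linarith
  then have "\<bar>(\<Sum>i<Suc n. g (?x i)) - (\<Sum>i<Suc n. h (?x i))\<bar> / Suc n \<le> (Suc n * e + 2 * B) / Suc n"
    by (rule divide_right_mono) simp
  also have "\<dots> = e + 2 * B / Suc n"
    by (simp add: field_simps)
  finally show ?thesis
    by (simp add: orbit_avg_def diff_divide_distrib[symmetric])
qed

lemma bounded_seq_limit_point:
  fixes u :: "nat \<Rightarrow> 'b \<Rightarrow> real"
  assumes "\<And>n x. \<bar>u n x\<bar> \<le> B x"
  obtains q where "\<And>S. closed S \<Longrightarrow> eventually (\<lambda>n. u n \<in> S) sequentially \<Longrightarrow> q \<in> S"
proof -
  let ?F = "filtermap u sequentially"
  define K where "K = PiE UNIV (\<lambda>x. {- B x .. B x})"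
  have "compactin (product_topology (\<lambda>_. euclidean) UNIV) K" \<comment> \<open>Tychonoff\<close>
    unfolding K_def compactin_PiE by auto
  then have "compact K" by (simp add: euclidean_product_topology)
  moreover have "u n \<in> K" for n
    using assms[of n] by (auto simp: K_def PiE_iff abs_le_iff minus_le_iff)
  then have "eventually (\<lambda>g. g \<in> K) ?F"
    by (simp add: eventually_filtermap)
  moreover have "?F \<noteq> bot" by (simp add: filtermap_bot_iff)
  ultimately obtain q where q: "inf (nhds q) ?F \<noteq> bot"
    unfolding compact_filter by blast
  show thesis
  proof
    fix S :: "('b \<Rightarrow> real) set"
    assume "closed S" and "eventually (\<lambda>n. u n \<in> S) sequentially"
    then have "eventually (\<lambda>g. g \<in> S) ?F" by (simp add: eventually_filtermap)
    show "q \<in> S"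
    proof (rule ccontr)
      assume "q \<notin> S"
      moreover from \<open>closed S\<close> have "open (- S)" by (simp add: closed_open)
      ultimately have "eventually (\<lambda>g. g \<notin> S) (nhds q)"
        using eventually_nhds_in_open[of "- S" q] by simp
      with \<open>eventually (\<lambda>g. g \<in> S) ?F\<close> have "eventually (\<lambda>_. False) (inf (nhds q) ?F)"
        unfolding eventually_inf by blast
      with q show False by (simp add: eventually_False)
    qed
  qed
qed

lemma closed_types: "closed {p. is_type_over fa ra FI RI as p}"
  unfolding is_type_over_def Ball_def
  by (intro closed_Collect_conj closed_Collect_all closed_Collect_imp open_Collect_const
      closed_Collect_eq closed_Collect_le continuous_intros continuous_on_product_coordinates)

text \<open>Affine formulas are not closed under composition with \<open>f\<close>, so the invariance
  \<open>p(\<phi>(f x)) = p(\<phi>(x))\<close> is stated through uniform approximations \<open>\<psi>\<close> of \<open>\<phi> \<circ> f\<close>.\<close>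
definition invariant_type ::
  "('f \<Rightarrow> nat) \<Rightarrow> ('r \<Rightarrow> nat) \<Rightarrow> ('f \<Rightarrow> 'a::metric_space list \<Rightarrow> 'a) \<Rightarrow> ('r \<Rightarrow> 'a list \<Rightarrow> real)
     \<Rightarrow> ('a \<Rightarrow> 'a) \<Rightarrow> (('f, 'r) aform \<Rightarrow> real) \<Rightarrow> bool" where
  "invariant_type fa ra FI RI f p \<longleftrightarrow>
     (\<forall>\<phi>\<in>forms1 fa ra. \<forall>\<psi>\<in>forms1 fa ra. \<forall>e.
        (\<forall>x. \<bar>feval FI RI (\<lambda>_. x) \<psi> - feval FI RI (\<lambda>_. f x) \<phi>\<bar> \<le> e) \<longrightarrow> \<bar>p \<psi> - p \<phi>\<bar> \<le> e)"

lemma par_asg_Nil [simp]: "par_asg b [] = (\<lambda>_. b)"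
  by (simp add: par_asg_def fun_eq_iff)

definition orbit_avg_type ::
  "('f \<Rightarrow> nat) \<Rightarrow> ('r \<Rightarrow> nat) \<Rightarrow> ('f \<Rightarrow> 'a::metric_space list \<Rightarrow> 'a) \<Rightarrow> ('r \<Rightarrow> 'a list \<Rightarrow> real)
     \<Rightarrow> ('a \<Rightarrow> 'a) \<Rightarrow> 'a \<Rightarrow> nat \<Rightarrow> ('f, 'r) aform \<Rightarrow> real" where
  "orbit_avg_type fa ra FI RI f c n \<phi> =
     (if \<phi> \<in> forms1 fa ra then orbit_avg f c (\<lambda>x. feval FI RI (\<lambda>_. x) \<phi>) n else 0)"

lemma is_type1_orbit_avg_type: "is_type1 fa ra FI RI (orbit_avg_type fa ra FI RI f c n)"
  unfolding is_type_over_def orbit_avg_type_def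
  by (auto simp: forms_n_def orbit_avg_def sum.distrib add_divide_distrib sum_distrib_left
      sum_nonneg simp del: sum.lessThan_Suc)

lemma forms1_bound:
  fixes FI :: "'f \<Rightarrow> 'a::complete_space list \<Rightarrow> 'a"
  assumes "is_structure fa ra FI RI"
  obtains B where "\<And>\<phi> s. \<phi> \<in> forms1 fa ra \<Longrightarrow> \<bar>feval FI RI s \<phi>\<bar> \<le> B \<phi>"
proof -
  have "\<forall>\<phi>. \<exists>B. \<phi> \<in> forms1 fa ra \<longrightarrow> (\<forall>s. \<bar>feval FI RI s \<phi>\<bar> \<le> B)"
    using feval_bounded[OF assms] by (auto simp: forms_n_def)
  then show thesis
    using that by metis
qed

lemma invariant_type_of_limit_point:
  fixes FI :: "'f \<Rightarrow> 'a::complete_space list \<Rightarrow> 'a" and RI :: "'r \<Rightarrow> 'a list \<Rightarrow> real"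
  assumes S: "is_structure fa ra FI RI"
    and q: "\<And>S. closed S \<Longrightarrow> eventually (\<lambda>n. orbit_avg_type fa ra FI RI f c n \<in> S) sequentially \<Longrightarrow> q \<in> S"
  shows "invariant_type fa ra FI RI f q"
  unfolding invariant_type_def
proof (intro ballI allI impI)
  let ?u = "orbit_avg_type fa ra FI RI f c"
  fix \<phi> \<psi> e
  assume \<phi>: "\<phi> \<in> forms1 fa ra" and \<psi>: "\<psi> \<in> forms1 fa ra"
    and close: "\<forall>x. \<bar>feval FI RI (\<lambda>_. x) \<psi> - feval FI RI (\<lambda>_. f x) \<phi>\<bar> \<le> e"
  obtain B where B: "\<And>x. \<bar>feval FI RI (\<lambda>_. x) \<phi>\<bar> \<le> B"
    using forms1_bound[OF S] \<phi> by metis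
  have "q \<in> {g. \<bar>g \<psi> - g \<phi>\<bar> \<le> e + 2 * B / Suc M}" for M
  proof (rule q)
    show "closed {g. \<bar>g \<psi> - g \<phi>\<bar> \<le> e + 2 * B / Suc M}"
      by (intro closed_Collect_le continuous_intros continuous_on_product_coordinates)
    have "\<bar>?u n \<psi> - ?u n \<phi>\<bar> \<le> e + 2 * B / Suc n" for n
      unfolding orbit_avg_type_def if_P[OF \<phi>] if_P[OF \<psi>]
      using close B by (intro abs_orbit_avg_diff_le) auto
    moreover have "2 * B / Suc n \<le> 2 * B / Suc M" if "M \<le> n" for n
      using that B[of c] by (intro divide_left_mono) auto
    ultimately show "\<forall>\<^sub>F n in sequentially. ?u n \<in> {g. \<bar>g \<psi> - g \<phi>\<bar> \<le> e + 2 * B / Suc M}"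
      unfolding eventually_sequentially mem_Collect_eq by (meson add_left_mono order_trans)
  qed
  then have "\<bar>q \<psi> - q \<phi>\<bar> \<le> e + 2 * B / Suc M" for M
    by blast
  moreover have "(\<lambda>M. e + 2 * B / Suc M) \<longlonglongrightarrow> e + 0"
    by (intro tendsto_add tendsto_const LIMSEQ_Suc[OF lim_const_over_n])
  ultimately show "\<bar>q \<psi> - q \<phi>\<bar> \<le> e"
    using LIMSEQ_le_const by fastforce
qed

lemma invariant_type_exists:
  fixes FI :: "'f \<Rightarrow> 'a::complete_space list \<Rightarrow> 'a" and RI :: "'r \<Rightarrow> 'a list \<Rightarrow> real"
  assumes S: "is_structure fa ra FI RI"
  obtains p where "is_type1 fa ra FI RI p" and "invariant_type fa ra FI RI f p"
proof -
  let ?u = "orbit_avg_type fa ra FI RI f (undefined :: 'a)"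
  obtain B where "\<And>\<phi> s. \<phi> \<in> forms1 fa ra \<Longrightarrow> \<bar>feval FI RI s \<phi>\<bar> \<le> B \<phi>"
    using forms1_bound[OF S] by blast
  then have "\<bar>?u n \<phi>\<bar> \<le> \<bar>B \<phi>\<bar>" for n \<phi>
    by (auto simp: orbit_avg_type_def intro: abs_orbit_avg_le order_trans[OF _ abs_ge_self])
  then obtain q where q: "\<And>S. closed S \<Longrightarrow> eventually (\<lambda>n. ?u n \<in> S) sequentially \<Longrightarrow> q \<in> S"
    using bounded_seq_limit_point[of ?u "\<lambda>\<phi>. \<bar>B \<phi>\<bar>"] by blast
  have "q \<in> {p. is_type1 fa ra FI RI p}"
    by (intro q closed_types always_eventually) (simp add: is_type1_orbit_avg_type)
  moreover have "invariant_type fa ra FI RI f q"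
    using invariant_type_of_limit_point[OF S q] .
  ultimately show thesis
    using that by simp
qed

lemma type_ext_value_invariant:
  assumes inv: "invariant_type fa ra FI RI f p" and \<phi>: "\<phi> \<in> forms1 fa ra"
    and "\<exists>\<psi>. approx1 fa ra FI RI \<psi> (\<lambda>x. feval FI RI (\<lambda>_. f x) \<phi>)"
  shows "type_ext_value fa ra FI RI p (\<lambda>x. feval FI RI (\<lambda>_. f x) \<phi>) (p \<phi>)"
  unfolding type_ext_value_def
proof (intro conjI allI impI)
  show "\<exists>\<psi>. approx1 fa ra FI RI \<psi> (\<lambda>x. feval FI RI (\<lambda>_. f x) \<phi>)" by fact
  fix \<psi>
  assume ap: "approx1 fa ra FI RI \<psi> (\<lambda>x. feval FI RI (\<lambda>_. f x) \<phi>)"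
  show "(\<lambda>k. p (\<psi> k)) \<longlonglongrightarrow> p \<phi>"
  proof (rule LIMSEQ_I)
    fix r :: real
    assume "0 < r"
    with ap obtain N where "\<forall>k\<ge>N. \<forall>x. \<bar>feval FI RI (\<lambda>_. x) (\<psi> k) - feval FI RI (\<lambda>_. f x) \<phi>\<bar> \<le> r / 2"
      unfolding approx1_def by (meson half_gt_zero)
    with inv \<phi> ap have "\<bar>p (\<psi> k) - p \<phi>\<bar> \<le> r / 2" if "k \<ge> N" for k
      using that unfolding invariant_type_def approx1_def by blast
    with \<open>0 < r\<close> show "\<exists>N. \<forall>k\<ge>N. norm (p (\<psi> k) - p \<phi>) < r"
      by force
  qed
qed

lemma invariant_type_realized:
  assumes inv: "invariant_type fa ra FI RI f p" and c: "realizes fa ra FI RI [] p c"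
    and \<phi>: "\<phi> \<in> forms1 fa ra" and ap: "approx1 fa ra FI RI \<psi> (\<lambda>x. feval FI RI (\<lambda>_. f x) \<phi>)"
  shows "feval FI RI (\<lambda>_. c) \<phi> = feval FI RI (\<lambda>_. f c) \<phi>"
proof -
  have p_eq: "p \<theta> = feval FI RI (\<lambda>_. c) \<theta>" if "\<theta> \<in> forms1 fa ra" for \<theta>
    using c that by (simp add: realizes_def)
  have "\<bar>feval FI RI (\<lambda>_. c) \<phi> - feval FI RI (\<lambda>_. f c) \<phi>\<bar> \<le> 0 + \<epsilon>" if "\<epsilon> > 0" for \<epsilon>
  proof -
    from ap \<open>\<epsilon> > 0\<close> obtain N where
      N: "\<forall>x. \<bar>feval FI RI (\<lambda>_. x) (\<psi> N) - feval FI RI (\<lambda>_. f x) \<phi>\<bar> \<le> \<epsilon> / 2"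
      unfolding approx1_def by (meson half_gt_zero order_refl)
    moreover from ap have "\<psi> N \<in> forms1 fa ra" by (simp add: approx1_def)
    ultimately have "\<bar>p (\<psi> N) - p \<phi>\<bar> \<le> \<epsilon> / 2"
      using inv \<phi> unfolding invariant_type_def by blast
    with N[rule_format, of c] show ?thesis
      using p_eq[OF \<phi>] p_eq[OF \<open>\<psi> N \<in> forms1 fa ra\<close>] by linarith
  qed
  then have "\<bar>feval FI RI (\<lambda>_. c) \<phi> - feval FI RI (\<lambda>_. f c) \<phi>\<bar> \<le> 0"
    by (rule field_le_epsilon)
  then show ?thesis by simp
qed

theorem mainTheorem14:
  fixes fa :: "'f \<Rightarrow> nat" and ra :: "'r \<Rightarrow> nat"
    and FI :: "'f \<Rightarrow> 'a::complete_space list \<Rightarrow> 'a" and RI :: "'r \<Rightarrow> 'a list \<Rightarrow> real"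
    and f :: "'a \<Rightarrow> 'a"
  assumes "is_structure fa ra FI RI"
    and "definable_fun fa ra FI RI f"
  shows "(\<exists>p. is_type1 fa ra FI RI p \<and>
            (\<forall>\<phi>\<in>forms1 fa ra.
               type_ext_value fa ra FI RI p (\<lambda>x. feval FI RI (\<lambda>_. f x) \<phi>) (p \<phi>)))
       \<and> (aleph0_saturated fa ra FI RI \<longrightarrow>
            (\<exists>c. \<forall>\<phi>\<in>forms1 fa ra. feval FI RI (\<lambda>_. c) \<phi> = feval FI RI (\<lambda>_. f c) \<phi>))"
proof -
  obtain p where p: "is_type1 fa ra FI RI p" and inv: "invariant_type fa ra FI RI f p"
    using invariant_type_exists[OF assms(1)] .
  have "\<forall>\<phi>\<in>forms1 fa ra. type_ext_value fa ra FI RI p (\<lambda>x. feval FI RI (\<lambda>_. f x) \<phi>) (p \<phi>)"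
    using type_ext_value_invariant[OF inv] approx1_definable_comp[OF assms] by blast
  moreover have "\<exists>c. \<forall>\<phi>\<in>forms1 fa ra. feval FI RI (\<lambda>_. c) \<phi> = feval FI RI (\<lambda>_. f c) \<phi>"
    if "aleph0_saturated fa ra FI RI"
  proof -
    from that p obtain c where "realizes fa ra FI RI [] p c"
      unfolding aleph0_saturated_def by blast
    then show ?thesis
      using invariant_type_realized[OF inv] approx1_definable_comp[OF assms] by metis
  qed
  ultimately show ?thesis
    using p by blast
qed

end
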